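(* Let $G$ be an undirected graph on $n$ vertices whose complement $\overline{G}$ is nonempty (has at least one edge). Then $\beta(G)=2$ if and only if $\overline{G}$ is bipartite.
   Context: For an undirected graph $G$ on vertex set $[n]$, consider the index coding problem: a server holds messages $x_1,\dots,x_n\in\Sigma$ ($|\Sigma|>1$), receiver $i$ wants $x_i$ and knows $x_j$ for every neighbor $j$ of $i$. A solution is an encoding $\mathcal{E}:\Sigma^n\to\Sigma_P$ from which each receiver can recover its message given its side information, for all message values. $\beta_t(G)$ is the minimum of $\lceil\log_2|\Sigma_P|\rceil$ over solutions with $|\Sigma|=2^t$, and $\beta(G)=\lim_t\beta_t(G)/t=\inf_t\beta_t(G)/t$. *)

theory Defs
  imports "HOL-Library.FuncSet" Complex_Main
begin

text \<open>A graph on vertex set [n] = {0..<n} is given by an edge relation E, assumed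
symmetric and irreflexive on {0..<n}.\<close>

definition nbrs :: "nat \<Rightarrow> (nat \<Rightarrow> nat \<Rightarrow> bool) \<Rightarrow> nat \<Rightarrow> nat set" where
  "nbrs n E i = {j. j < n \<and> E i j}"

definition msgs :: "nat \<Rightarrow> nat \<Rightarrow> (nat \<Rightarrow> nat) set" where
  "msgs n t = {0..<n} \<rightarrow>\<^sub>E {0..<2^t}"

definition is_index_code ::
  "nat \<Rightarrow> (nat \<Rightarrow> nat \<Rightarrow> bool) \<Rightarrow> nat \<Rightarrow> nat set \<Rightarrow> ((nat \<Rightarrow> nat) \<Rightarrow> nat) \<Rightarrow> bool" where
  "is_index_code n E t P enc \<longleftrightarrow> finite P \<and> enc ` msgs n t \<subseteq> P \<and>
     (\<exists>dec :: nat \<Rightarrow> nat \<Rightarrow> (nat \<Rightarrow> nat) \<Rightarrow> nat.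
        \<forall>x \<in> msgs n t. \<forall>i < n. dec i (enc x) (restrict x (nbrs n E i)) = x i)"

definition beta_t :: "nat \<Rightarrow> (nat \<Rightarrow> nat \<Rightarrow> bool) \<Rightarrow> nat \<Rightarrow> nat" where
  "beta_t n E t = (LEAST k. \<exists>P enc. is_index_code n E t P enc \<and> k = nat \<lceil>log 2 (card P)\<rceil>)"

text \<open>beta(G) = inf over t >= 1 of beta_t(G)/t (equal to the limit).\<close>
definition beta :: "nat \<Rightarrow> (nat \<Rightarrow> nat \<Rightarrow> bool) \<Rightarrow> real" where
  "beta n E = (INF t\<in>{1..}. real (beta_t n E t) / real t)"

definition bipartite_on :: "nat set \<Rightarrow> (nat \<Rightarrow> nat \<Rightarrow> bool) \<Rightarrow> bool" where
  "bipartite_on V R \<longleftrightarrow> (\<exists>A B. A \<union> B = V \<and> A \<inter> B = {} \<and>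
     (\<forall>u\<in>V. \<forall>v\<in>V. R u v \<longrightarrow> (u \<in> A \<and> v \<in> B) \<or> (u \<in> B \<and> v \<in> A)))"

definition compl_graph :: "(nat \<Rightarrow> nat \<Rightarrow> bool) \<Rightarrow> nat \<Rightarrow> nat \<Rightarrow> bool" where
  "compl_graph E u v \<longleftrightarrow> u \<noteq> v \<and> \<not> E u v"

end

theory Submission
  imports Defs
begin

text \<open>Two non-adjacent receivers \<open>a, b\<close> must together learn both \<open>x_a\<close> and \<open>x_b\<close> from the
  broadcast, so \<open>\<beta>_t \<ge> 2t\<close> and \<open>\<beta> \<ge> 2\<close>. If the complement of \<open>G\<close> is bipartite, \<open>G\<close> is
  covered by two cliques, and broadcasting the sum of the messages of each clique modulo \<open>2^t\<close>
  takes \<open>2t\<close> bits, so \<open>\<beta> = 2\<close>. Otherwise the complement contains an odd cycle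
  \<open>u_0, \<dots>, u_2k\<close> with \<open>k \<ge> 1\<close>. Relisted as \<open>w_s = u_(2s mod (2k+1))\<close>, receiver \<open>w_s\<close> knows
  neither \<open>w_(s+k)\<close> nor \<open>w_(s+k+1)\<close>; within a fibre of the encoding each message is then
  determined by all messages but those two, and submodularity of entropy along intervals of the
  cycle bounds each fibre by \<open>2^(t(2k+1)(k-1)/k)\<close>. Hence \<open>\<beta>_t \<ge> (2 + 1/k) t\<close> and \<open>\<beta> > 2\<close>.\<close>

section \<open>Entropy of a uniformly distributed point\<close>

definition fiber_card :: "'a set \<Rightarrow> ('a \<Rightarrow> 'b) \<Rightarrow> 'a \<Rightarrow> nat" where
  "fiber_card I \<phi> x = card {y\<in>I. \<phi> y = \<phi> x}"

text \<open>The Shannon entropy, in nats, of \<open>\<phi> X\<close> for \<open>X\<close> uniformly distributed on the finite set \<open>I\<close>.\<close>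
definition unif_entropy :: "'a set \<Rightarrow> ('a \<Rightarrow> 'b) \<Rightarrow> real" where
  "unif_entropy I \<phi> = (\<Sum>x\<in>I. ln (real (card I) / real (fiber_card I \<phi> x))) / real (card I)"

lemma fiber_card_pos: "finite I \<Longrightarrow> x \<in> I \<Longrightarrow> fiber_card I \<phi> x > 0"
  unfolding fiber_card_def by (subst card_gt_0_iff) auto

lemma fiber_card_le: "finite I \<Longrightarrow> fiber_card I \<phi> x \<le> card I"
  unfolding fiber_card_def by (rule card_mono) auto

lemma sum_over_fiber_card:
  assumes "finite I"
  shows "(\<Sum>x\<in>I. g (\<phi> x) / real (fiber_card I \<phi> x)) = (\<Sum>v\<in>\<phi>`I. g v)"
proof -
  have "(\<Sum>x\<in>I. g (\<phi> x) / real (fiber_card I \<phi> x)) =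
        (\<Sum>v\<in>\<phi>`I. \<Sum>x\<in>{x\<in>I. \<phi> x = v}. g v / real (card {x\<in>I. \<phi> x = v}))"
    by (subst sum.image_gen[OF assms]) (auto simp: fiber_card_def intro!: sum.cong)
  also have "\<dots> = (\<Sum>v\<in>\<phi>`I. g v)"
  proof (rule sum.cong[OF refl])
    fix v assume "v \<in> \<phi>`I"
    then have "card {x\<in>I. \<phi> x = v} > 0" using assms by (subst card_gt_0_iff) auto
    then show "(\<Sum>x\<in>{x\<in>I. \<phi> x = v}. g v / real (card {x\<in>I. \<phi> x = v})) = g v" by simp
  qed
  finally show ?thesis .
qed

lemma sum_card_fibers:
  assumes "finite I"
  shows "(\<Sum>a\<in>\<phi>`I. real (card {y\<in>I. \<phi> y = a \<and> Q y})) = real (card {y\<in>I. Q y})"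
proof -
  have "{y\<in>I. Q y} = (\<Union>a\<in>\<phi>`I. {y\<in>I. \<phi> y = a \<and> Q y})" by auto
  also have "card \<dots> = (\<Sum>a\<in>\<phi>`I. card {y\<in>I. \<phi> y = a \<and> Q y})"
    by (rule card_UN_disjoint) (use assms in auto)
  finally show ?thesis by simp
qed

lemma unif_entropy_nonneg:
  assumes "finite I"
  shows "0 \<le> unif_entropy I \<phi>"
proof -
  have "0 \<le> ln (card I / fiber_card I \<phi> x)" if "x \<in> I" for x
    using fiber_card_pos[OF assms that] fiber_card_le[OF assms]
    by (auto intro!: ln_ge_zero simp: le_divide_eq_1)
  then show ?thesis unfolding unif_entropy_def by (simp add: sum_nonneg)
qed

lemma unif_entropy_cong:
  assumes "\<And>x y. x \<in> I \<Longrightarrow> y \<in> I \<Longrightarrow> \<phi> x = \<phi> y \<longleftrightarrow> \<psi> x = \<psi> y"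
  shows "unif_entropy I \<phi> = unif_entropy I \<psi>"
proof -
  have "fiber_card I \<phi> x = fiber_card I \<psi> x" if "x \<in> I" for x
    unfolding fiber_card_def using assms that by (metis (mono_tags, lifting) mem_Collect_eq)
  then show ?thesis unfolding unif_entropy_def by (auto intro!: sum.cong arg_cong[where f="\<lambda>s. s / _"])
qed

lemma unif_entropy_inj:
  assumes "finite I" "inj_on \<phi> I"
  shows "unif_entropy I \<phi> = ln (card I)"
proof -
  have "fiber_card I \<phi> x = 1" if "x \<in> I" for x
  proof -
    have "{y\<in>I. \<phi> y = \<phi> x} = {x}" using assms(2) that by (auto simp: inj_on_def)
    then show ?thesis by (simp add: fiber_card_def)
  qed
  then show ?thesis using assms(1) by (cases "I = {}") (simp_all add: unif_entropy_def)
qed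

lemma unif_entropy_le_ln_card_image:
  assumes fin: "finite I" and ne: "I \<noteq> {}"
  shows "unif_entropy I \<phi> \<le> ln (card (\<phi> ` I))"
proof -
  let ?N = "real (card I)" and ?R = "real (card (\<phi> ` I))"
  have N: "?N > 0" and R: "?R > 0" using fin ne by (simp_all add: card_gt_0_iff)
  have "ln (?N / fiber_card I \<phi> x) - ln ?R \<le> ?N / ?R * (1 / fiber_card I \<phi> x) - 1" if x: "x \<in> I" for x
  proof -
    have c: "real (fiber_card I \<phi> x) > 0" using fiber_card_pos[OF fin x] by simp
    have "ln (?N / fiber_card I \<phi> x) - ln ?R = ln (?N / fiber_card I \<phi> x / ?R)"
      using N R c by (simp add: ln_div ln_mult)
    also have "\<dots> \<le> ?N / fiber_card I \<phi> x / ?R - 1"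
      by (rule ln_le_minus_one) (use N R c in simp)
    finally show ?thesis by (simp add: mult.commute)
  qed
  then have "(\<Sum>x\<in>I. ln (?N / fiber_card I \<phi> x) - ln ?R) \<le> (\<Sum>x\<in>I. ?N / ?R * (1 / fiber_card I \<phi> x) - 1)"
    by (rule sum_mono)
  also have "\<dots> = ?N / ?R * (\<Sum>x\<in>I. 1 / fiber_card I \<phi> x) - ?N"
    by (simp add: sum_subtractf sum_distrib_left)
  also have "(\<Sum>x\<in>I. 1 / real (fiber_card I \<phi> x)) = ?R"
    using sum_over_fiber_card[OF fin, of "\<lambda>_. 1" \<phi>] by simp
  finally have "(\<Sum>x\<in>I. ln (?N / fiber_card I \<phi> x)) \<le> ln ?R * ?N"
    using R by (simp add: sum_subtractf algebra_simps)
  then show ?thesis unfolding unif_entropy_def using N by (simp add: divide_le_eq)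
qed

lemma ln_ratio_sum_le:
  fixes N a b c d :: real
  assumes "N > 0" "a > 0" "b > 0" "c > 0" "d > 0"
  shows "ln (N / a) + ln (N / b) - ln (N / c) - ln (N / d) \<le> c * d / (a * b) - 1"
proof -
  have "ln (N / a) + ln (N / b) - ln (N / c) - ln (N / d) = ln (c * d / (a * b))"
    using assms by (simp add: ln_div ln_mult)
  also have "\<dots> \<le> c * d / (a * b) - 1" by (rule ln_le_minus_one) (use assms in simp)
  finally show ?thesis .
qed

text \<open>Apply \<open>ln z \<le> z - 1\<close> to the ratio of \<open>p(a,z) p(b,z) / p(z)\<close> to the joint distribution
  \<open>p(a,b,z)\<close> and sum over the sample.\<close>
lemma unif_entropy_submodular:
  assumes fin: "finite I" and ne: "I \<noteq> {}"
  shows "unif_entropy I (\<lambda>x. (\<phi> x, \<psi> x, \<chi> x)) + unif_entropy I \<chi>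
    \<le> unif_entropy I (\<lambda>x. (\<phi> x, \<chi> x)) + unif_entropy I (\<lambda>x. (\<psi> x, \<chi> x))"
proof -
  define N where "N = real (card I)"
  have N: "N > 0" using fin ne by (simp add: N_def card_gt_0_iff)
  define J where "J = (\<lambda>x. (\<phi> x, \<psi> x, \<chi> x))"
  define Cxz where "Cxz a z = real (card {y\<in>I. \<phi> y = a \<and> \<chi> y = z})" for a z
  define Cyz where "Cyz b z = real (card {y\<in>I. \<psi> y = b \<and> \<chi> y = z})" for b z
  define Cz where "Cz z = real (card {y\<in>I. \<chi> y = z})" for z
  define g where "g v = (case v of (a, b, z) \<Rightarrow> Cxz a z * Cyz b z / Cz z)" for v
  define \<Delta> where "\<Delta> x = ln (N / fiber_card I J x) + ln (N / fiber_card I \<chi> x)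
      - ln (N / fiber_card I (\<lambda>x. (\<phi> x, \<chi> x)) x) - ln (N / fiber_card I (\<lambda>x. (\<psi> x, \<chi> x)) x)" for x
  have \<Delta>_le: "\<Delta> x \<le> g (J x) / fiber_card I J x - 1" if x: "x \<in> I" for x
  proof -
    have "\<Delta> x \<le> real (fiber_card I (\<lambda>x. (\<phi> x, \<chi> x)) x) * fiber_card I (\<lambda>x. (\<psi> x, \<chi> x)) x
        / (real (fiber_card I J x) * fiber_card I \<chi> x) - 1"
      unfolding \<Delta>_def by (rule ln_ratio_sum_le[OF N]) (simp_all add: fiber_card_pos[OF fin x])
    then show ?thesis by (simp add: g_def J_def Cxz_def Cyz_def Cz_def fiber_card_def mult.commute)
  qed
  have "(\<Sum>x\<in>I. g (J x) / fiber_card I J x) = (\<Sum>v\<in>J`I. g v)"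
    by (rule sum_over_fiber_card[OF fin])
  also have "\<dots> \<le> (\<Sum>v\<in>\<phi>`I \<times> (\<psi>`I \<times> \<chi>`I). g v)"
    by (rule sum_mono2) (use fin in \<open>auto simp: J_def g_def Cxz_def Cyz_def Cz_def\<close>)
  also have "\<dots> = (\<Sum>a\<in>\<phi>`I. \<Sum>b\<in>\<psi>`I. \<Sum>z\<in>\<chi>`I. Cxz a z * Cyz b z / Cz z)"
    by (simp add: sum.cartesian_product g_def)
  also have "\<dots> = (\<Sum>z\<in>\<chi>`I. \<Sum>a\<in>\<phi>`I. \<Sum>b\<in>\<psi>`I. Cxz a z * Cyz b z / Cz z)"
    by (subst sum.swap) (subst (2) sum.swap, rule refl)
  also have "\<dots> = (\<Sum>z\<in>\<chi>`I. (\<Sum>a\<in>\<phi>`I. Cxz a z) * (\<Sum>b\<in>\<psi>`I. Cyz b z) / Cz z)"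
    by (simp only: sum_product sum_divide_distrib)
  also have "\<dots> = (\<Sum>z\<in>\<chi>`I. Cz z)"
  proof (rule sum.cong[OF refl])
    fix z assume "z \<in> \<chi>`I"
    then have "Cz z > 0" using fin unfolding Cz_def by (auto simp: card_gt_0_iff)
    then show "(\<Sum>a\<in>\<phi>`I. Cxz a z) * (\<Sum>b\<in>\<psi>`I. Cyz b z) / Cz z = Cz z"
      using sum_card_fibers[OF fin, of \<phi> "\<lambda>y. \<chi> y = z"] sum_card_fibers[OF fin, of \<psi> "\<lambda>y. \<chi> y = z"]
      by (simp add: Cxz_def Cyz_def Cz_def)
  qed
  also have "\<dots> = N"
    using sum_card_fibers[OF fin, of \<chi> "\<lambda>_. True"] unfolding Cz_def N_def by simp
  finally have "(\<Sum>x\<in>I. g (J x) / fiber_card I J x) \<le> N" .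
  moreover have "(\<Sum>x\<in>I. \<Delta> x) \<le> (\<Sum>x\<in>I. g (J x) / fiber_card I J x) - N"
    using sum_mono[of I \<Delta>, OF \<Delta>_le] by (simp add: sum_subtractf N_def)
  ultimately have "(\<Sum>x\<in>I. \<Delta> x) \<le> 0" by simp
  then show ?thesis
    unfolding unif_entropy_def J_def[symmetric] N_def[symmetric] using N
    by (simp add: \<Delta>_def sum.distrib sum_subtractf divide_le_eq
        add_divide_distrib[symmetric] diff_divide_distrib[symmetric])
qed

section \<open>Entropy of coordinate restrictions\<close>

definition restr_entropy :: "('a \<Rightarrow> 'b) set \<Rightarrow> 'a set \<Rightarrow> real" where
  "restr_entropy I S = unif_entropy I (\<lambda>x. restrict x S)"

lemma restrict_eq_iff: "restrict x S = restrict y S \<longleftrightarrow> (\<forall>i\<in>S. x i = y i)"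
  by (auto simp: restrict_def fun_eq_iff)

lemma restr_entropy_nonneg: "finite I \<Longrightarrow> 0 \<le> restr_entropy I S"
  unfolding restr_entropy_def by (rule unif_entropy_nonneg)

lemma restr_entropy_submodular:
  assumes "finite I" "I \<noteq> {}"
  shows "restr_entropy I (A \<union> B) + restr_entropy I (A \<inter> B) \<le> restr_entropy I A + restr_entropy I B"
proof -
  let ?p = "\<lambda>x. restrict x (A - B)" and ?s = "\<lambda>x. restrict x (B - A)" and ?c = "\<lambda>x. restrict x (A \<inter> B)"
  have "restr_entropy I (A \<union> B) = unif_entropy I (\<lambda>x. (?p x, ?s x, ?c x))"
    and "restr_entropy I A = unif_entropy I (\<lambda>x. (?p x, ?c x))"
    and "restr_entropy I B = unif_entropy I (\<lambda>x. (?s x, ?c x))"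
    unfolding restr_entropy_def by (rule unif_entropy_cong; auto simp: restrict_eq_iff)+
  then show ?thesis
    using unif_entropy_submodular[OF assms, of ?p ?s ?c] by (simp add: restr_entropy_def)
qed

lemma restr_entropy_union_le:
  assumes "finite I" "I \<noteq> {}"
  shows "restr_entropy I (A \<union> B) \<le> restr_entropy I A + restr_entropy I B"
  using restr_entropy_submodular[OF assms, of A B] restr_entropy_nonneg[OF assms(1), of "A \<inter> B"]
  by simp

lemma restr_entropy_insert_determined:
  assumes "\<And>x y. x \<in> I \<Longrightarrow> y \<in> I \<Longrightarrow> (\<forall>j\<in>T. x j = y j) \<Longrightarrow> x i = y i"
  shows "restr_entropy I (insert i T) = restr_entropy I T"
  unfolding restr_entropy_def by (rule unif_entropy_cong) (use assms in \<open>auto simp: restrict_eq_iff\<close>)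

lemma restr_entropy_extensional:
  assumes "finite I" "I \<subseteq> extensional V"
  shows "restr_entropy I V = ln (card I)"
proof -
  have "inj_on (\<lambda>x. restrict x V) I"
    using assms(2) by (intro inj_onI) (metis extensional_restrict subsetD)
  then show ?thesis unfolding restr_entropy_def by (rule unif_entropy_inj[OF assms(1)])
qed

lemma restr_entropy_le_card_mult_ln:
  fixes I :: "('a \<Rightarrow> nat) set" and q :: nat
  assumes fin: "finite I" and ne: "I \<noteq> {}" and "finite S" and q: "q > 0"
    and bounded: "\<And>x i. x \<in> I \<Longrightarrow> i \<in> S \<Longrightarrow> x i < q"
  shows "restr_entropy I S \<le> card S * ln q"
proof -
  have "card ((\<lambda>x. restrict x S) ` I) \<le> card (S \<rightarrow>\<^sub>E {0..<q})"
    using bounded by (intro card_mono) (auto simp: finite_PiE \<open>finite S\<close>)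
  then have "card ((\<lambda>x. restrict x S) ` I) \<le> q ^ card S"
    by (simp add: card_PiE \<open>finite S\<close>)
  moreover have "card ((\<lambda>x. restrict x S) ` I) > 0" using fin ne by (simp add: card_gt_0_iff)
  ultimately have "ln (card ((\<lambda>x. restrict x S) ` I)) \<le> ln (real (q ^ card S))"
    using q by (subst ln_le_cancel_iff) auto
  then show ?thesis
    using unif_entropy_le_ln_card_image[OF fin ne, of "\<lambda>x. restrict x S"] q
    by (simp add: restr_entropy_def ln_realpow)
qed

definition recoverable_outside :: "(nat \<Rightarrow> 'b) set \<Rightarrow> nat \<Rightarrow> (nat \<Rightarrow> nat set) \<Rightarrow> bool" where
  "recoverable_outside I m D \<longleftrightarrow>
     (\<forall>s<m. \<forall>x\<in>I. \<forall>y\<in>I. (\<forall>j<m. j \<notin> D s \<longrightarrow> x j = y j) \<longrightarrow> x s = y s)"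

lemma restr_entropy_insert_recoverable:
  assumes "recoverable_outside I m D" "s < m" "\<And>j. j < m \<Longrightarrow> j \<notin> D s \<Longrightarrow> j \<in> T"
  shows "restr_entropy I (insert s T) = restr_entropy I T"
  using assms unfolding recoverable_outside_def by (intro restr_entropy_insert_determined) blast

lemma interval_submodular_increment_le:
  fixes f :: "nat set \<Rightarrow> real"
  assumes submod: "\<And>a b. a \<le> b \<Longrightarrow> b < N \<Longrightarrow> f {a..b+1} + f {a+1..b} \<le> f {a..b} + f {a+1..b+1}"
    and "a \<le> b" "b < N"
  shows "f {a..b+1} - f {a..b} \<le> f {b..b+1} - f {b..b}"
  using \<open>a \<le> b\<close>
proof (induction a rule: inc_induct)
  case (step a)
  then show ?case using submod[of a b] \<open>b < N\<close> by simp
qed simp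

lemma interval_submodular_telescope:
  fixes f :: "nat set \<Rightarrow> real"
  assumes submod: "\<And>a b. a \<le> b \<Longrightarrow> b < N \<Longrightarrow> f {a..b+1} + f {a+1..b} \<le> f {a..b} + f {a+1..b+1}"
  shows "j \<le> N \<Longrightarrow> f {0..j} \<le> f {0..0} + (\<Sum>i<j. f {i..i+1} - f {i..i})"
proof (induction j)
  case (Suc j)
  have "f {0..j+1} - f {0..j} \<le> f {j..j+1} - f {j..j}"
    by (rule interval_submodular_increment_le[OF submod]) (use Suc.prems in auto)
  then show ?case using Suc by simp
qed simp

text \<open>After deleting a window \<open>{r, r+1}\<close> with \<open>r < k\<close>, the letter \<open>r+k+1\<close> is still determined by
  the remaining ones, since its excluded letters are exactly \<open>r\<close> and \<open>r+1\<close>; so these carry at most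
  \<open>(m-3) ln q\<close> of entropy. Submodularity along the prefixes \<open>{0..j}\<close> adds up the savings to
  \<open>|I| \<le> q^(m(k-1)/k)\<close>.\<close>
locale cyclic_recoverable =
  fixes I :: "(nat \<Rightarrow> nat) set" and k q :: nat
  assumes k: "1 \<le> k" and nonempty: "I \<noteq> {}"
    and words: "I \<subseteq> {0..<2*k+1} \<rightarrow>\<^sub>E {0..<q}"
    and recoverable: "recoverable_outside I (2*k+1) (\<lambda>s. {s, (s+k) mod (2*k+1), (s+k+1) mod (2*k+1)})"
begin

abbreviation m where "m \<equiv> 2*k+1"

lemma finite_words: "finite I"
  using words by (rule finite_subset) (simp add: finite_PiE)

lemma q_pos: "q > 0"
  using nonempty words by (force simp: PiE_def Pi_def)

lemma restr_entropy_all: "restr_entropy I {0..<m} = ln (card I)"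
  by (rule restr_entropy_extensional[OF finite_words]) (use words in \<open>auto simp: PiE_def\<close>)

lemma letter_less: "x \<in> I \<Longrightarrow> i < m \<Longrightarrow> x i < q"
  using words by (auto simp: PiE_def Pi_def)

lemma restr_entropy_le: "S \<subseteq> {0..<m} \<Longrightarrow> restr_entropy I S \<le> card S * ln q"
  using letter_less q_pos
  by (intro restr_entropy_le_card_mult_ln[OF finite_words nonempty]) (auto intro: finite_subset)

lemma drop_letter:
  "s < m \<Longrightarrow> (\<And>j. j < m \<Longrightarrow> j \<notin> {s, (s+k) mod m, (s+k+1) mod m} \<Longrightarrow> j \<in> T) \<Longrightarrow>
    restr_entropy I (insert s T) = restr_entropy I T"
  by (rule restr_entropy_insert_recoverable[OF recoverable])

lemma without_letter: "r < m \<Longrightarrow> restr_entropy I ({0..<m} - {r..r}) = ln (card I)"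
  using drop_letter[of r "{0..<m} - {r}"] restr_entropy_all by (auto simp: insert_absorb)

lemma without_window: "r < k \<Longrightarrow> restr_entropy I ({0..<m} - {r..r+1}) \<le> real (m - 3) * ln q"
proof -
  assume r: "r < k"
  define t where "t = r + k + 1"
  have "t + k = r + m" "t + k + 1 = (r + 1) + m" "r + 1 < m" "t < m" using r by (simp_all add: t_def)
  then have t: "t < m" "(t + k) mod m = r" "(t + k + 1) mod m = r + 1"
    by (metis mod_add_self2 mod_less add_lessD1)+
  have "{0..<m} - {r..r+1} = insert t ({0..<m} - {r, r+1, t})" using r t by (auto simp: t_def)
  also have "restr_entropy I \<dots> = restr_entropy I ({0..<m} - {r, r+1, t})"
    by (rule drop_letter[OF t(1)]) (use t in auto)
  also have "\<dots> \<le> card ({0..<m} - {r, r+1, t}) * ln q" by (rule restr_entropy_le) auto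
  also have "card ({0..<m} - {r, r+1, t}) = m - 3" using r t by (simp add: card_Diff_subset t_def)
  finally show ?thesis .
qed

lemma without_prefix_le:
  "restr_entropy I ({0..<m} - {0..k}) \<le> ln (card I) + real k * (real (m - 3) * ln q - ln (card I))"
proof -
  define f where "f R = restr_entropy I ({0..<m} - R)" for R
  have submod: "f {a..b+1} + f {a+1..b} \<le> f {a..b} + f {a+1..b+1}" if "a \<le> b" for a b
  proof -
    have "({0..<m} - {a..b}) \<union> ({0..<m} - {a+1..b+1}) = {0..<m} - {a+1..b}"
      and "({0..<m} - {a..b}) \<inter> ({0..<m} - {a+1..b+1}) = {0..<m} - {a..b+1}" using that by auto
    then show ?thesis
      using restr_entropy_submodular[OF finite_words nonempty, of "{0..<m} - {a..b}" "{0..<m} - {a+1..b+1}"]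
      by (simp add: f_def)
  qed
  have "f {0..k} \<le> f {0..0} + (\<Sum>i<k. f {i..i+1} - f {i..i})"
  proof (rule interval_submodular_telescope[where N = k])
    show "f {a..b+1} + f {a+1..b} \<le> f {a..b} + f {a+1..b+1}" if "a \<le> b" "b < k" for a b
      using that(1) by (rule submod)
  qed simp
  also have "\<dots> \<le> ln (card I) + (\<Sum>i<k. real (m - 3) * ln q - ln (card I))"
    using without_letter without_window by (intro add_mono sum_mono) (simp_all add: f_def)
  finally show ?thesis using k by (simp add: f_def of_nat_diff)
qed

lemma without_prefix_ge: "ln (card I) - real (k - 1) * ln q \<le> restr_entropy I ({0..<m} - {0..k})"
proof -
  have "ln (card I) = restr_entropy I (insert k ({0..<m} - {k}))"
    using restr_entropy_all by (simp add: insert_absorb)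
  also have "\<dots> = restr_entropy I ({0..<m} - {k})" by (rule drop_letter) auto
  also have "{0..<m} - {k} = insert 0 ({0..<m} - {0, k})" using k by auto
  also have "restr_entropy I \<dots> = restr_entropy I ({0..<m} - {0, k})" by (rule drop_letter) auto
  also have "{0..<m} - {0, k} = ({0..<m} - {0..k}) \<union> {1..<k}" by auto
  also have "restr_entropy I \<dots> \<le> restr_entropy I ({0..<m} - {0..k}) + real (card {1..<k}) * ln q"
    using restr_entropy_union_le[OF finite_words nonempty, of "{0..<m} - {0..k}" "{1..<k}"]
      restr_entropy_le[of "{1..<k}"] by auto
  finally show ?thesis by simp
qed

lemma ln_card_le: "real k * ln (card I) \<le> (real k - 1) * real m * ln q"
proof -
  have "real k * ln (card I) \<le> (real k * real (m - 3) + real (k - 1)) * ln q"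
    using without_prefix_le without_prefix_ge by (simp add: algebra_simps)
  also have "real k * real (m - 3) + real (k - 1) = (real k - 1) * real m"
    using k by (simp add: of_nat_diff algebra_simps)
  finally show ?thesis .
qed

end

lemma ln_card_le_cyclic_recoverable:
  fixes I :: "(nat \<Rightarrow> nat) set" and k q :: nat
  assumes "1 \<le> k" "I \<subseteq> {0..<2*k+1} \<rightarrow>\<^sub>E {0..<q}"
    and "recoverable_outside I (2*k+1) (\<lambda>s. {s, (s+k) mod (2*k+1), (s+k+1) mod (2*k+1)})"
  shows "real k * ln (card I) \<le> (real k - 1) * real (2*k+1) * ln q"
proof (cases "I = {}")
  case True
  then show ?thesis using assms(1) by (cases "q = 0") (simp_all add: ln_ge_zero)
next
  case False
  with assms show ?thesis by (intro cyclic_recoverable.ln_card_le) (simp add: cyclic_recoverable_def)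
qed

section \<open>Odd cycles in non-bipartite graphs\<close>

definition walk :: "('a \<Rightarrow> 'a \<Rightarrow> bool) \<Rightarrow> nat \<Rightarrow> (nat \<Rightarrow> 'a) \<Rightarrow> bool" where
  "walk R L w \<longleftrightarrow> (\<forall>i<L. R (w i) (w (Suc i)))"

lemma walk_append:
  assumes "walk R L1 w1" "walk R L2 w2" "w1 L1 = w2 0"
  shows "walk R (L1 + L2) (\<lambda>i. if i \<le> L1 then w1 i else w2 (i - L1))"
  unfolding walk_def
proof (intro allI impI)
  fix i assume i: "i < L1 + L2"
  show "R (if i \<le> L1 then w1 i else w2 (i - L1)) (if Suc i \<le> L1 then w1 (Suc i) else w2 (Suc i - L1))"
  proof (cases "i < L1")
    case True then show ?thesis using assms(1) by (auto simp: walk_def)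
  next
    case False
    then have "i - L1 < L2" "Suc i - L1 = Suc (i - L1)" using i by auto
    then show ?thesis using assms False by (cases "i = L1") (auto simp: walk_def)
  qed
qed

lemma walk_reverse:
  assumes "\<And>u v. R u v \<Longrightarrow> R v u" "walk R L w"
  shows "walk R L (\<lambda>i. w (L - i))"
  unfolding walk_def
proof (intro allI impI)
  fix i assume "i < L"
  then have "R (w (L - Suc i)) (w (Suc (L - Suc i)))" and "Suc (L - Suc i) = L - i"
    using assms(2) by (auto simp: walk_def)
  then show "R (w (L - i)) (w (L - Suc i))" using assms(1) by simp
qed

lemma walk_shift: "walk R L w \<Longrightarrow> a \<le> b \<Longrightarrow> b \<le> L \<Longrightarrow> walk R (b - a) (\<lambda>i. w (a + i))"
  by (auto simp: walk_def)

lemma walk_snoc: "walk R L w \<Longrightarrow> R (w L) v \<Longrightarrow> walk R (Suc L) (w(Suc L := v))"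
  by (auto simp: walk_def less_Suc_eq)

lemma rtranclp_imp_walk:
  assumes "R\<^sup>*\<^sup>* x y"
  shows "\<exists>L w. walk R L w \<and> w 0 = x \<and> w L = y"
  using assms
proof (induction rule: rtranclp_induct)
  case base
  then show ?case by (intro exI[of _ 0]) (auto simp: walk_def)
next
  case (step y z)
  then obtain L w where "walk R L w" "w 0 = x" "w L = y" by blast
  then have "walk R (Suc L) (w(Suc L := z)) \<and> (w(Suc L := z)) 0 = x \<and> (w(Suc L := z)) (Suc L) = z"
    using step.hyps(2) by (simp add: walk_snoc)
  then show ?case by blast
qed

text \<open>Two-colour every vertex by the parity of a walk from the least vertex of its component;
  an edge inside a colour class would close a walk of odd length.\<close>
lemma bipartite_if_no_odd_closed_walk:
  fixes R :: "nat \<Rightarrow> nat \<Rightarrow> bool"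
  assumes sym: "\<And>u v. R u v \<Longrightarrow> R v u"
    and no_odd: "\<And>L w. walk R L w \<Longrightarrow> w L = w 0 \<Longrightarrow> even L"
  shows "bipartite_on V R"
proof -
  define root where "root x = (LEAST r. R\<^sup>*\<^sup>* r x)" for x
  have root_reaches: "R\<^sup>*\<^sup>* (root x) x" for x unfolding root_def by (rule LeastI[of _ x]) simp
  have root_eq: "root u = root v" if "R u v" for u v
  proof -
    have "R\<^sup>*\<^sup>* r u \<longleftrightarrow> R\<^sup>*\<^sup>* r v" for r
      using that sym by (meson rtranclp.rtrancl_into_rtrancl)
    then show ?thesis unfolding root_def by simp
  qed
  define A where "A = {x\<in>V. \<exists>L w. walk R L w \<and> w 0 = root x \<and> w L = x \<and> even L}"
  have "u \<in> A \<longleftrightarrow> v \<notin> A" if uv: "R u v" "u \<in> V" "v \<in> V" for u v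
  proof
    assume "u \<in> A"
    then obtain L w where w: "walk R L w" "w 0 = root u" "w L = u" "even L" by (auto simp: A_def)
    have w': "walk R (Suc L) (w(Suc L := v))" by (rule walk_snoc) (use w uv in auto)
    show "v \<notin> A"
    proof
      assume "v \<in> A"
      then obtain L' w'' where w'': "walk R L' w''" "w'' 0 = root v" "w'' L' = v" "even L'"
        by (auto simp: A_def)
      let ?c = "\<lambda>i. if i \<le> L' then w'' (L' - i) else (w(Suc L := v)) (i - L')"
      have "walk R (L' + Suc L) ?c"
        by (rule walk_append[OF walk_reverse[OF sym w''(1)] w']) (use w w'' root_eq[OF uv(1)] in auto)
      moreover have "?c (L' + Suc L) = ?c 0" using w'' by simp
      ultimately have "even (L' + Suc L)" by (rule no_odd)
      then show False using w(4) w''(4) by simp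
    qed
  next
    assume "v \<notin> A"
    obtain L w where w: "walk R L w" "w 0 = root u" "w L = u"
      using rtranclp_imp_walk[OF root_reaches[of u]] by blast
    have w': "walk R (Suc L) (w(Suc L := v))" by (rule walk_snoc) (use w uv in auto)
    show "u \<in> A"
    proof (rule ccontr)
      assume "u \<notin> A"
      then have "odd L" using w uv by (auto simp: A_def)
      then have "v \<in> A" using w' w root_eq[OF uv(1)] uv unfolding A_def
        by (intro CollectI conjI exI[of _ "Suc L"] exI[of _ "w(Suc L := v)"]) auto
      then show False using \<open>v \<notin> A\<close> by simp
    qed
  qed
  then show ?thesis
    unfolding bipartite_on_def by (intro exI[of _ A] exI[of _ "V - A"]) (auto simp: A_def)
qed

text \<open>A shortest closed walk of odd length repeats no vertex: a repetition would split it into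
  two shorter closed walks, one of which has odd length.\<close>
lemma odd_closed_walk_imp_odd_cycle:
  fixes R :: "'a \<Rightarrow> 'a \<Rightarrow> bool"
  assumes irrefl: "\<And>u. \<not> R u u"
    and "walk R L0 w0" "w0 L0 = w0 0" "odd L0"
  shows "\<exists>k::nat. \<exists>u. 1 \<le> k \<and> inj_on u {0..<2*k+1} \<and> (\<forall>i<2*k+1. R (u i) (u ((i+1) mod (2*k+1))))"
proof -
  define odd_closed where "odd_closed L \<longleftrightarrow> (\<exists>w. walk R L w \<and> w L = w 0 \<and> odd L)" for L
  have "odd_closed L0" using assms by (auto simp: odd_closed_def)
  define L where "L = (LEAST L. odd_closed L)"
  have "odd_closed L" unfolding L_def by (rule LeastI) fact
  then obtain w where w: "walk R L w" "w L = w 0" "odd L" by (auto simp: odd_closed_def)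
  have shorter: "\<not> odd_closed L'" if "L' < L" for L' using that not_less_Least unfolding L_def by blast
  have "L \<noteq> 1"
  proof
    assume "L = 1"
    then show False using w irrefl by (auto simp: walk_def)
  qed
  obtain k where "L = 2*k+1" using w(3) by (rule oddE)
  with \<open>L \<noteq> 1\<close> have k: "L = 2*k+1" "1 \<le> k" by auto
  have "inj_on w {0..<L}"
  proof (rule ccontr)
    assume "\<not> inj_on w {0..<L}"
    then have "\<exists>a b. a < b \<and> b < L \<and> w a = w b"
      unfolding inj_on_def by (metis atLeastLessThan_iff linorder_neqE_nat)
    then obtain a b where ab: "a < b" "b < L" "w a = w b" by blast
    have inner: "walk R (b - a) (\<lambda>i. w (a + i))" by (rule walk_shift[OF w(1)]) (use ab in auto)
    let ?c = "\<lambda>i. if i \<le> L - b then w (b + i) else w (i - (L - b))"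
    have outer: "walk R ((L - b) + a) ?c"
      using walk_append[OF walk_shift[OF w(1), of b L] walk_shift[OF w(1), of 0 a, simplified]] ab w(2) by simp
    have "?c ((L - b) + a) = ?c 0" using ab w(2) by (cases "a = 0") auto
    with outer have "odd ((L - b) + a) \<Longrightarrow> odd_closed ((L - b) + a)"
      unfolding odd_closed_def by blast
    moreover have "odd (b - a) \<Longrightarrow> odd_closed (b - a)"
      unfolding odd_closed_def using inner ab by (intro exI[of _ "\<lambda>i. w (a + i)"]) simp
    moreover have "(b - a) + ((L - b) + a) = L" using ab by simp
    then have "odd (b - a) \<or> odd ((L - b) + a)" using w(3) by (metis odd_add)
    moreover have "b - a < L" "(L - b) + a < L" using ab by auto
    ultimately show False using shorter by blast
  qed
  moreover have "R (w i) (w ((i+1) mod L))" if i: "i < L" for i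
  proof (cases "i + 1 < L")
    case False
    then have "i + 1 = L" using i by simp
    then show ?thesis using w(1,2) i by (auto simp: walk_def)
  qed (use w(1) i in \<open>auto simp: walk_def\<close>)
  ultimately show ?thesis using k by (intro exI[of _ k] exI[of _ w]) auto
qed

lemma not_bipartite_imp_odd_cycle:
  fixes R :: "nat \<Rightarrow> nat \<Rightarrow> bool"
  assumes sym: "\<And>u v. u \<in> V \<Longrightarrow> v \<in> V \<Longrightarrow> R u v \<Longrightarrow> R v u"
    and irrefl: "\<And>u. u \<in> V \<Longrightarrow> \<not> R u u"
    and "\<not> bipartite_on V R"
  shows "\<exists>k::nat. \<exists>u. 1 \<le> k \<and> inj_on u {0..<2*k+1} \<and> u ` {0..<2*k+1} \<subseteq> V \<and>
    (\<forall>i<2*k+1. R (u i) (u ((i+1) mod (2*k+1))))"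
proof -
  define R' where "R' u v \<longleftrightarrow> u \<in> V \<and> v \<in> V \<and> R u v" for u v
  have "\<not> bipartite_on V R'"
    using assms(3) unfolding bipartite_on_def R'_def by simp
  then obtain L w where "walk R' L w" "w L = w 0" "odd L"
    using bipartite_if_no_odd_closed_walk[of R' V] sym unfolding R'_def by blast
  then obtain k :: nat and u where "1 \<le> k" "inj_on u {0..<2*k+1}" and cyc: "\<forall>i<2*k+1. R' (u i) (u ((i+1) mod (2*k+1)))"
    using odd_closed_walk_imp_odd_cycle[of R'] irrefl unfolding R'_def by blast
  moreover have "u ` {0..<2*k+1} \<subseteq> V" using cyc by (auto simp: R'_def)
  ultimately show ?thesis using cyc unfolding R'_def by blast
qed

section \<open>Bounds on index codes\<close>

lemma finite_msgs: "finite (msgs n t)"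
  by (simp add: msgs_def finite_PiE)

lemma card_msgs: "card (msgs n t) = 2 ^ (t * n)"
  by (simp add: msgs_def card_PiE power_mult)

lemma msgs_less: "x \<in> msgs n t \<Longrightarrow> i < n \<Longrightarrow> x i < 2 ^ t"
  by (auto simp: msgs_def PiE_def Pi_def)

lemma index_code_exists: "\<exists>P enc. is_index_code n E t P enc"
proof -
  obtain enc :: "(nat \<Rightarrow> nat) \<Rightarrow> nat" and N where enc: "inj_on enc (msgs n t)"
    using finite_imp_inj_to_nat_seg[OF finite_msgs] by blast
  define dec where "dec i p (z :: nat \<Rightarrow> nat) = the_inv_into (msgs n t) enc p i" for i p z
  have "is_index_code n E t (enc ` msgs n t) enc"
    unfolding is_index_code_def using enc finite_msgs
    by (intro conjI exI[of _ dec]) (auto simp: dec_def the_inv_into_f_f)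
  then show ?thesis by blast
qed

lemma le_beta_t:
  assumes "\<And>P enc. is_index_code n E t P enc \<Longrightarrow> X \<le> log 2 (card P)"
  shows "X \<le> beta_t n E t"
proof -
  obtain P enc where "is_index_code n E t P enc" and "beta_t n E t = nat \<lceil>log 2 (card P)\<rceil>"
    using LeastI_ex[of "\<lambda>k. \<exists>P enc. is_index_code n E t P enc \<and> k = nat \<lceil>log 2 (card P)\<rceil>"]
      index_code_exists unfolding beta_t_def by blast
  then show ?thesis using assms real_nat_ceiling_ge order_trans by metis
qed

lemma beta_t_le: "is_index_code n E t P enc \<Longrightarrow> beta_t n E t \<le> nat \<lceil>log 2 (card P)\<rceil>"
  unfolding beta_t_def by (rule Least_le) blast

lemma le_beta:
  assumes "\<And>t P enc. t \<ge> 1 \<Longrightarrow> is_index_code n E t P enc \<Longrightarrow> real t * c \<le> log 2 (card P)"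
  shows "c \<le> beta n E"
  unfolding beta_def
proof (rule cINF_greatest)
  fix t :: nat assume "t \<in> {1..}"
  then have t: "t \<ge> 1" by simp
  have "real t * c \<le> beta_t n E t" by (rule le_beta_t) (rule assms[OF t])
  with t show "c \<le> real (beta_t n E t) / real t" by (simp add: pos_le_divide_eq mult.commute)
qed auto

lemma beta_le:
  assumes "is_index_code n E t P enc" "t \<ge> 1"
  shows "beta n E \<le> real (nat \<lceil>log 2 (card P)\<rceil>) / t"
proof -
  have "beta n E \<le> real (beta_t n E t) / real t"
    unfolding beta_def using assms(2) by (intro cINF_lower bdd_belowI[of _ 0]) auto
  also have "\<dots> \<le> real (nat \<lceil>log 2 (card P)\<rceil>) / t"
    using beta_t_le[OF assms(1)] by (simp add: divide_right_mono)
  finally show ?thesis .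
qed

text \<open>An index code for \<open>G\<close> yields one for any induced subgraph \<open>G[w]\<close>: messages outside
  the image of \<open>w\<close> are fixed to \<open>0\<close>.\<close>
lemma is_index_code_induced:
  assumes code: "is_index_code n E t P enc"
    and inj: "inj_on w {0..<m}" and into: "w ` {0..<m} \<subseteq> {0..<n}"
  shows "\<exists>enc'. is_index_code m (\<lambda>s s'. E (w s) (w s')) t P enc'"
proof -
  obtain dec where dec: "\<And>x i. x \<in> msgs n t \<Longrightarrow> i < n \<Longrightarrow> dec i (enc x) (restrict x (nbrs n E i)) = x i"
    and "finite P" and encP: "enc ` msgs n t \<subseteq> P"
    using code unfolding is_index_code_def by blast
  define lift where "lift y j = (if j < n then if j \<in> w ` {0..<m} then y (the_inv_into {0..<m} w j)
      else 0 else undefined)" for y :: "nat \<Rightarrow> nat" and j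
  have lift_w: "lift y (w s) = y s" if "s < m" for y s
    using that inj into by (auto simp: lift_def the_inv_into_f_f image_subset_iff)
  have lift_msgs: "lift y \<in> msgs n t" if y: "y \<in> msgs m t" for y
  proof -
    have "lift y j < 2 ^ t" if "j < n" for j
    proof (cases "j \<in> w ` {0..<m}")
      case True
      then obtain s where "s < m" "j = w s" by auto
      then show ?thesis using lift_w msgs_less[OF y] by simp
    qed (use that in \<open>simp add: lift_def\<close>)
    then show ?thesis by (auto simp: msgs_def lift_def)
  qed
  define E' where "E' s s' \<longleftrightarrow> E (w s) (w s')" for s s'
  have side_info: "restrict (lift (restrict y (nbrs m E' s))) (nbrs n E (w s))
      = restrict (lift y) (nbrs n E (w s))" if "s < m" for y s
  proof (rule restrict_ext)
    fix j assume j: "j \<in> nbrs n E (w s)"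
    show "lift (restrict y (nbrs m E' s)) j = lift y j"
    proof (cases "j \<in> w ` {0..<m}")
      case True
      then obtain s' where s': "s' < m" "j = w s'" by auto
      with j have "s' \<in> nbrs m E' s" by (auto simp: nbrs_def E'_def)
      with s' show ?thesis by (simp add: lift_w)
    qed (simp add: lift_def)
  qed
  define dec' where "dec' s p z = dec (w s) p (restrict (lift z) (nbrs n E (w s)))" for s p z
  have "is_index_code m E' t P (enc \<circ> lift)"
    unfolding is_index_code_def
  proof (intro conjI exI[of _ dec'] ballI allI impI)
    fix y s assume y: "y \<in> msgs m t" and s: "s < m"
    have "w s < n" using into s by (auto simp: image_subset_iff)
    then show "dec' s ((enc \<circ> lift) y) (restrict y (nbrs m E' s)) = y s"
      using dec[OF lift_msgs[OF y]] side_info[OF s] lift_w[OF s] by (simp add: dec'_def)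
  qed (use \<open>finite P\<close> encP lift_msgs in auto)
  then show ?thesis unfolding E'_def by blast
qed

text \<open>Each fibre of the encoding is a family in which receiver \<open>s\<close> recovers \<open>x s\<close> from the
  messages outside \<open>D s\<close>, because \<open>D s\<close> contains none of its neighbours.\<close>
lemma card_msgs_le_card_code_mult:
  assumes code: "is_index_code m E t P enc"
    and D: "\<And>s s'. s < m \<Longrightarrow> s' < m \<Longrightarrow> s' \<in> D s \<Longrightarrow> \<not> E s s'"
    and fibres: "\<And>J. J \<subseteq> msgs m t \<Longrightarrow> recoverable_outside J m D \<Longrightarrow> real (card J) \<le> B"
  shows "2 ^ (t * m) \<le> real (card P) * B"
proof -
  obtain dec where dec: "\<And>x i. x \<in> msgs m t \<Longrightarrow> i < m \<Longrightarrow> dec i (enc x) (restrict x (nbrs m E i)) = x i"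
    and finP: "finite P" and encP: "enc ` msgs m t \<subseteq> P"
    using code unfolding is_index_code_def by blast
  define fibre where "fibre p = {x \<in> msgs m t. enc x = p}" for p
  have "recoverable_outside (fibre p) m D" for p
    unfolding recoverable_outside_def
  proof (intro allI impI ballI)
    fix s x y assume s: "s < m" and xy: "x \<in> fibre p" "y \<in> fibre p"
      and agree: "\<forall>j<m. j \<notin> D s \<longrightarrow> x j = y j"
    have "restrict x (nbrs m E s) = restrict y (nbrs m E s)"
      using agree D[OF s] by (intro restrict_ext) (auto simp: nbrs_def)
    then show "x s = y s"
      using dec[of x s] dec[of y s] xy s by (simp add: fibre_def)
  qed
  then have card_fibre: "real (card (fibre p)) \<le> B" for p by (intro fibres) (auto simp: fibre_def)
  have "msgs m t = (\<Union>p\<in>P. fibre p)" using encP by (auto simp: fibre_def)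
  then have "card (msgs m t) \<le> (\<Sum>p\<in>P. card (fibre p))"
    using card_UN_le[OF finP] by simp
  then have "real (card (msgs m t)) \<le> (\<Sum>p\<in>P. real (card (fibre p)))" by (simp flip: of_nat_sum)
  also have "\<dots> \<le> real (card P) * B" using sum_mono[of P _ "\<lambda>_. B", OF card_fibre] by simp
  finally show ?thesis by (simp add: card_msgs)
qed

lemma card_le_1_recoverable_everywhere:
  assumes "J \<subseteq> msgs m t" "recoverable_outside J m (\<lambda>_. {0..<m})"
  shows "card J \<le> 1"
proof -
  have "x = y" if "x \<in> J" "y \<in> J" for x y
    using assms that unfolding recoverable_outside_def msgs_def
    by (intro extensionalityI[of x "{0..<m}" y]) (auto simp: PiE_def)
  then show ?thesis by (simp add: card_le_Suc0_iff_eq finite_subset[OF assms(1) finite_msgs])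
qed

lemma log_card_code_ge_independent_set:
  fixes m :: nat
  assumes code: "is_index_code n E t P enc"
    and inj: "inj_on w {0..<m}" and into: "w ` {0..<m} \<subseteq> {0..<n}"
    and indep: "\<And>s s'. s < m \<Longrightarrow> s' < m \<Longrightarrow> \<not> E (w s) (w s')"
  shows "real t * m \<le> log 2 (card P)"
proof -
  obtain enc' where code': "is_index_code m (\<lambda>s s'. E (w s) (w s')) t P enc'"
    using is_index_code_induced[OF code inj into] by blast
  have "2 ^ (t * m) \<le> real (card P) * 1"
    by (rule card_msgs_le_card_code_mult[OF code', of "\<lambda>_. {0..<m}"])
      (use indep card_le_1_recoverable_everywhere in auto)
  moreover have "(0::real) < 2 ^ (t * m)" by simp
  ultimately have "log 2 (2 ^ (t * m)) \<le> log 2 (card P)"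
    by (subst log_le_cancel_iff) (auto intro: less_le_trans[of 0 "2 ^ (t * m)"])
  then show ?thesis by (simp add: log_nat_power)
qed

lemma double_mod_inj: "inj_on (\<lambda>s. 2 * s mod (2*k+1)) {0..<2*k+1::nat}"
proof (rule inj_onI)
  fix s s' assume s: "s \<in> {0..<2*k+1}" and s': "s' \<in> {0..<2*k+1}"
    and eq: "2 * s mod (2*k+1) = 2 * s' mod (2*k+1)"
  have halve: "(k+1) * (2 * x mod (2*k+1)) mod (2*k+1) = x" if "x < 2*k+1" for x :: nat
  proof -
    have "(k+1) * (2 * x mod (2*k+1)) mod (2*k+1) = (k+1) * (2 * x) mod (2*k+1)"
      by (rule mod_mult_right_eq)
    also have "(k+1) * (2 * x) = x + x * (2*k+1)" by (simp add: algebra_simps)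
    also have "(x + x * (2*k+1)) mod (2*k+1) = x mod (2*k+1)" by (rule mod_mult_self1)
    also have "\<dots> = x" using that by (rule mod_less)
    finally show ?thesis .
  qed
  show "s = s'" using halve[of s] halve[of s'] s s' eq by (metis atLeastLessThan_iff)
qed

lemma double_mod_neighbours:
  fixes s k m :: nat
  assumes m: "m = 2*k+1"
  shows "(2 * ((s+k) mod m) mod m + 1) mod m = 2 * s mod m"
    and "(2 * s mod m + 1) mod m = 2 * ((s+k+1) mod m) mod m"
proof -
  have "(2 * ((s+k) mod m) mod m + 1) mod m = (2 * (s+k) mod m + 1) mod m"
    by (simp only: mod_mult_right_eq)
  also have "\<dots> = (2 * (s+k) + 1) mod m" by (rule mod_add_left_eq)
  also have "2 * (s+k) + 1 = 2 * s + m" by (simp add: m)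
  finally show "(2 * ((s+k) mod m) mod m + 1) mod m = 2 * s mod m" by simp
next
  have "2 * ((s+k+1) mod m) mod m = 2 * (s+k+1) mod m" by (rule mod_mult_right_eq)
  also have "2 * (s+k+1) = (2 * s + 1) + m" by (simp add: m)
  also have "(2 * s + 1 + m) mod m = (2 * s mod m + 1) mod m" by (simp only: mod_add_self2 mod_add_left_eq)
  finally show "(2 * s mod m + 1) mod m = 2 * ((s+k+1) mod m) mod m" by simp
qed

text \<open>Relisting an odd cycle \<open>u\<close> of the complement as \<open>w s = u (2s mod m)\<close> makes the cycle
  neighbours of \<open>w s\<close> the vertices \<open>w (s+k)\<close> and \<open>w (s+k+1)\<close>.\<close>
lemma odd_cycle_relisted:
  fixes u :: "nat \<Rightarrow> nat" and k m :: nat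
  assumes m: "m = 2*k+1"
    and sym: "\<And>i j. i < n \<Longrightarrow> j < n \<Longrightarrow> E i j \<longleftrightarrow> E j i"
    and irrefl: "\<And>i. i < n \<Longrightarrow> \<not> E i i"
    and inj: "inj_on u {0..<m}" and into: "u ` {0..<m} \<subseteq> {0..<n}"
    and cycle: "\<And>i. i < m \<Longrightarrow> compl_graph E (u i) (u ((i+1) mod m))"
  shows "inj_on (\<lambda>s. u (2 * s mod m)) {0..<m}"
    and "(\<lambda>s. u (2 * s mod m)) ` {0..<m} \<subseteq> {0..<n}"
    and "\<And>s s'. s < m \<Longrightarrow> s' < m \<Longrightarrow> s' \<in> {s, (s+k) mod m, (s+k+1) mod m} \<Longrightarrow>
      \<not> E (u (2 * s mod m)) (u (2 * s' mod m))"
proof -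
  have "m > 0" by (simp add: m)
  have u_lt: "u i < n" if "i < m" for i using into that by (auto simp: image_subset_iff)
  show "inj_on (\<lambda>s. u (2 * s mod m)) {0..<m}"
  proof (rule inj_onI)
    fix s s' assume "s \<in> {0..<m}" "s' \<in> {0..<m}" "u (2 * s mod m) = u (2 * s' mod m)"
    moreover have "2 * s mod m < m" "2 * s' mod m < m" using \<open>m > 0\<close> by simp_all
    ultimately have "2 * s mod m = 2 * s' mod m" using inj by (auto dest: inj_onD)
    with \<open>s \<in> {0..<m}\<close> \<open>s' \<in> {0..<m}\<close> show "s = s'"
      using double_mod_inj[of k] unfolding m by (auto dest: inj_onD)
  qed
  show "(\<lambda>s. u (2 * s mod m)) ` {0..<m} \<subseteq> {0..<n}" using u_lt \<open>m > 0\<close> by auto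
  have nonadj: "\<not> E (u i) (u j)" if "i < m" "j < m" "(i+1) mod m = j \<or> (j+1) mod m = i" for i j
    using that cycle sym u_lt by (auto simp: compl_graph_def)
  show "\<not> E (u (2 * s mod m)) (u (2 * s' mod m))"
    if "s < m" "s' < m" "s' \<in> {s, (s+k) mod m, (s+k+1) mod m}" for s s'
    using that irrefl[OF u_lt] \<open>m > 0\<close>
      nonadj[OF _ _ disjI2[OF double_mod_neighbours(1)[OF m]]]
      nonadj[OF _ _ disjI1[OF double_mod_neighbours(2)[OF m]]]
    by auto
qed

text \<open>By the relisting, the fibres of the code satisfy the hypothesis of
  \<open>ln_card_le_cyclic_recoverable\<close> and so have at most \<open>2^(t m (k-1)/k)\<close> elements.\<close>
lemma log_card_code_ge_odd_cycle:
  assumes code: "is_index_code n E t P enc" and k: "1 \<le> k"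
    and sym: "\<And>i j. i < n \<Longrightarrow> j < n \<Longrightarrow> E i j \<longleftrightarrow> E j i"
    and irrefl: "\<And>i. i < n \<Longrightarrow> \<not> E i i"
    and inj: "inj_on u {0..<2*k+1}" and into: "u ` {0..<2*k+1} \<subseteq> {0..<n}"
    and cycle: "\<And>i. i < 2*k+1 \<Longrightarrow> compl_graph E (u i) (u ((i+1) mod (2*k+1)))"
  shows "real t * (2 + 1 / real k) \<le> log 2 (card P)"
proof -
  define m where "m = 2*k+1"
  note relisted = odd_cycle_relisted[OF m_def sym irrefl inj[folded m_def] into[folded m_def]
      cycle[folded m_def]]
  obtain enc' where code': "is_index_code m (\<lambda>s s'. E (u (2 * s mod m)) (u (2 * s' mod m))) t P enc'"
    using is_index_code_induced[OF code relisted(1,2)] by blast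
  define B where "B = 2 powr (real t * (real k - 1) * m / k)"
  have "B > 0" by (simp add: B_def)
  have fibre_bound: "real (card J) \<le> B"
    if "J \<subseteq> msgs m t" "recoverable_outside J m (\<lambda>s. {s, (s+k) mod m, (s+k+1) mod m})" for J
  proof (cases "J = {}")
    case False
    have "real k * ln (card J) \<le> (real k - 1) * real m * ln (real (2 ^ t))"
      using ln_card_le_cyclic_recoverable[OF k, of J "2 ^ t"] that by (simp add: m_def msgs_def)
    then have "ln (card J) \<le> ln B"
      using k by (simp add: B_def ln_powr ln_realpow field_simps)
    moreover have "real (card J) > 0"
      using False finite_subset[OF that(1) finite_msgs] by (simp add: card_gt_0_iff)
    ultimately show ?thesis using \<open>B > 0\<close> by simp
  qed (simp add: B_def)
  have le: "2 ^ (t * m) \<le> real (card P) * B"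
    by (rule card_msgs_le_card_code_mult[OF code' _ fibre_bound]) (use relisted(3) in auto)
  have "card P > 0"
  proof (rule ccontr)
    assume "\<not> card P > 0"
    with le have "(2::real) ^ (t * m) \<le> 0" by simp
    then show False using zero_less_power[of "2::real" "t * m"] by linarith
  qed
  have "real t * m = log 2 (2 ^ (t * m))" by (simp add: log_nat_power)
  also have "\<dots> \<le> log 2 (real (card P) * B)"
    using le \<open>B > 0\<close> \<open>card P > 0\<close> by (subst log_le_cancel_iff) auto
  also have "\<dots> = log 2 (card P) + real t * (real k - 1) * m / k"
    using \<open>B > 0\<close> \<open>card P > 0\<close> by (simp add: log_mult B_def)
  finally show ?thesis using k by (simp add: m_def field_simps)
qed

lemma sum_mod_recover:
  fixes x :: "nat \<Rightarrow> nat"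
  assumes "finite C" "i \<in> C" "x i < q"
  shows "nat ((int ((\<Sum>j\<in>C. x j) mod q) - (\<Sum>j\<in>C - {i}. int (x j))) mod int q) = x i"
proof -
  have "int (\<Sum>j\<in>C. x j) = int (x i) + (\<Sum>j\<in>C - {i}. int (x j))"
    using assms by (simp add: sum.remove)
  then have "(int ((\<Sum>j\<in>C. x j) mod q) - (\<Sum>j\<in>C - {i}. int (x j))) mod int q = int (x i) mod int q"
    by (simp add: of_nat_mod mod_diff_left_eq)
  then show ?thesis using assms(3) by simp
qed

lemma index_code_two_cliques:
  assumes cover: "A \<union> B = {0..<n}"
    and cliques: "\<And>C u v. C \<in> {A, B} \<Longrightarrow> u \<in> C \<Longrightarrow> v \<in> C \<Longrightarrow> u \<noteq> v \<Longrightarrow> E u v"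
  shows "\<exists>P enc. is_index_code n E t P enc \<and> card P = 2 ^ (2 * t)"
proof -
  define q :: nat where "q = 2 ^ t"
  have "q > 0" by (simp add: q_def)
  have fin: "finite A" "finite B" using cover by (metis finite_Un finite_atLeastLessThan)+
  define enc where "enc x = ((\<Sum>j\<in>A. x j) mod q) * q + (\<Sum>j\<in>B. x j) mod q" for x :: "nat \<Rightarrow> nat"
  define dec where "dec i p s = (if i \<in> A
      then nat ((int (p div q) - (\<Sum>j\<in>A - {i}. int (s j))) mod int q)
      else nat ((int (p mod q) - (\<Sum>j\<in>B - {i}. int (s j))) mod int q))" for i p and s :: "nat \<Rightarrow> nat"
  have enc_lt: "enc x < q * q" for x
  proof -
    have "enc x < ((\<Sum>j\<in>A. x j) mod q + 1) * q" using \<open>q > 0\<close> by (simp add: enc_def)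
    also have "\<dots> \<le> q * q" using \<open>q > 0\<close> by (intro mult_right_mono) (simp_all add: Suc_leI)
    finally show ?thesis .
  qed
  have side_info: "(\<Sum>j\<in>C - {i}. int (restrict x (nbrs n E i) j)) = (\<Sum>j\<in>C - {i}. int (x j))"
    if "C \<in> {A, B}" "i \<in> C" for C i x
    using that cliques cover by (intro sum.cong) (auto simp: nbrs_def)
  have "is_index_code n E t {0..<q*q} enc"
    unfolding is_index_code_def
  proof (intro conjI exI[of _ dec] ballI allI impI)
    fix x i assume x: "x \<in> msgs n t" and i: "i < n"
    have "x i < q" using msgs_less[OF x i] by (simp add: q_def)
    then show "dec i (enc x) (restrict x (nbrs n E i)) = x i"
      using i cover \<open>q > 0\<close> side_info sum_mod_recover[OF fin(1)] sum_mod_recover[OF fin(2)]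
      by (auto simp: dec_def enc_def)
  qed (use enc_lt in auto)
  moreover have "card {0..<q*q} = 2 ^ (2 * t)" by (simp add: q_def mult_2 power_add)
  ultimately show ?thesis by blast
qed

lemma two_le_beta:
  assumes "\<And>i j. i < n \<Longrightarrow> j < n \<Longrightarrow> E i j \<longleftrightarrow> E j i"
    and "\<And>i. i < n \<Longrightarrow> \<not> E i i"
    and "a < n" "b < n" "compl_graph E a b"
  shows "2 \<le> beta n E"
proof (rule le_beta)
  fix t P enc assume code: "is_index_code n E t P enc"
  define w where "w s = (if s = 0 then a else b)" for s :: nat
  have "a \<noteq> b" "\<not> E a b" "\<not> E b a" using assms by (auto simp: compl_graph_def)
  then have "real t * real 2 \<le> log 2 (card P)"
    using assms by (intro log_card_code_ge_independent_set[OF code, of w])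
      (auto simp: w_def inj_on_def less_2_cases_iff)
  then show "real t * 2 \<le> log 2 (card P)" by simp
qed

lemma beta_le_2_if_bipartite_compl:
  assumes "bipartite_on {0..<n} (compl_graph E)"
  shows "beta n E \<le> 2"
proof -
  obtain A B where cover: "A \<union> B = {0..<n}" and "A \<inter> B = {}"
    and cross: "\<forall>u\<in>{0..<n}. \<forall>v\<in>{0..<n}. compl_graph E u v \<longrightarrow> (u \<in> A \<and> v \<in> B) \<or> (u \<in> B \<and> v \<in> A)"
    using assms unfolding bipartite_on_def by blast
  have cliques: "E u v" if "C \<in> {A, B}" "u \<in> C" "v \<in> C" "u \<noteq> v" for C u v
  proof (rule ccontr)
    assume "\<not> E u v"
    with that have "compl_graph E u v" by (simp add: compl_graph_def)
    moreover have "u \<in> {0..<n}" "v \<in> {0..<n}" using that cover by auto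
    ultimately show False using cross[rule_format, of u v] that \<open>A \<inter> B = {}\<close> by auto
  qed
  have "\<exists>P enc. is_index_code n E 1 P enc \<and> card P = 2 ^ (2 * 1)"
    using cover cliques by (rule index_code_two_cliques)
  then obtain P enc where code: "is_index_code n E 1 P enc" and card: "card P = 2 ^ (2 * 1)"
    by blast
  have "log 2 (card P) = log 2 (2 ^ 2)" using card by simp
  also have "\<dots> = 2" using log_pow_cancel[of 2 2] by simp
  finally have "real (nat \<lceil>log 2 (card P)\<rceil>) = 2" by simp
  then show ?thesis using beta_le[OF code] by simp
qed

lemma two_lt_beta_if_not_bipartite_compl:
  assumes sym: "\<And>i j. i < n \<Longrightarrow> j < n \<Longrightarrow> E i j \<longleftrightarrow> E j i"
    and irrefl: "\<And>i. i < n \<Longrightarrow> \<not> E i i"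
    and "\<not> bipartite_on {0..<n} (compl_graph E)"
  shows "2 < beta n E"
proof -
  have "\<exists>k::nat. \<exists>u. 1 \<le> k \<and> inj_on u {0..<2*k+1} \<and> u ` {0..<2*k+1} \<subseteq> {0..<n} \<and>
      (\<forall>i<2*k+1. compl_graph E (u i) (u ((i+1) mod (2*k+1))))"
    by (rule not_bipartite_imp_odd_cycle[OF _ _ assms(3)])
      (auto simp: compl_graph_def dest: sym[THEN iffD1])
  then obtain k :: nat and u where k: "1 \<le> k" and "inj_on u {0..<2*k+1}" "u ` {0..<2*k+1} \<subseteq> {0..<n}"
    and "\<forall>i<2*k+1. compl_graph E (u i) (u ((i+1) mod (2*k+1)))"
    by blast
  then have cycle: "\<And>i. i < 2*k+1 \<Longrightarrow> compl_graph E (u i) (u ((i+1) mod (2*k+1)))" by blast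
  have "2 + 1 / real k \<le> beta n E"
  proof (rule le_beta)
    fix t P enc assume code: "is_index_code n E t P enc"
    from code k sym irrefl \<open>inj_on u _\<close> \<open>u ` _ \<subseteq> _\<close> cycle
    show "real t * (2 + 1 / real k) \<le> log 2 (card P)" by (rule log_card_code_ge_odd_cycle)
  qed
  moreover have "0 < 1 / real k" using k by simp
  ultimately show ?thesis by linarith
qed

theorem corollary3p6:
  fixes n :: nat and E :: "nat \<Rightarrow> nat \<Rightarrow> bool"
  assumes sym: "\<And>i j. i < n \<Longrightarrow> j < n \<Longrightarrow> E i j \<longleftrightarrow> E j i"
    and irrefl: "\<And>i. i < n \<Longrightarrow> \<not> E i i"
    and compl_nonempty: "\<exists>i<n. \<exists>j<n. compl_graph E i j"
  shows "beta n E = 2 \<longleftrightarrow> bipartite_on {0..<n} (compl_graph E)"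
proof -
  obtain a b where "a < n" "b < n" "compl_graph E a b" using compl_nonempty by blast
  with sym irrefl have "2 \<le> beta n E" by (rule two_le_beta)
  moreover have "bipartite_on {0..<n} (compl_graph E) \<Longrightarrow> beta n E \<le> 2"
    by (rule beta_le_2_if_bipartite_compl)
  moreover have "\<not> bipartite_on {0..<n} (compl_graph E) \<Longrightarrow> 2 < beta n E"
    using sym irrefl by (rule two_lt_beta_if_not_bipartite_compl)
  ultimately show ?thesis by (cases "bipartite_on {0..<n} (compl_graph E)") auto
qed

end
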